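(* Let $L$ be a finite-dimensional pure, nonnilpotent, solvable Lie algebra over $\mathbb{C}$ of breadth $2$ such that $\dim[L,L]=2$ and $\dim L^k=2$ for all integers $k\geq 2$. Then the following are equivalent: (1) $C_L([L,L])\neq\{0\}$; (2) $[L,L]$ is an abelian ideal of $L$; (3) $[L,L]\subseteq C_L([L,L])$.
   Context: For $x\in L$, $b(x)=\mathrm{rank}(\mathrm{ad}_x)$ and the breadth of $L$ is $b(L)=\max\{b(x)\mid x\in L\}$. $L$ is pure if it has no abelian ideal as a direct summand; equivalently $Z(L)\subseteq[L,L]$, where $Z(L)$ is the center. The lower central series is indexed by $L^0=L$, $L^1=[L,L]$, $L^k=[L,L^{k-1}]$ for $k\geq 2$. $C_L(S)$ denotes the centralizer of a subset $S$ in $L$. *)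

theory Defs
  imports Complex_Main
begin

text \<open>A complex Lie algebra: the underlying space is the whole type 'a, a complex
vector space via the scalar multiplication sc, with bracket br.\<close>

definition lie_algebra :: "(complex \<Rightarrow> 'a::ab_group_add \<Rightarrow> 'a) \<Rightarrow> ('a \<Rightarrow> 'a \<Rightarrow> 'a) \<Rightarrow> bool" where
  "lie_algebra sc br \<longleftrightarrow>
     vector_space sc
     \<and> (\<forall>x. Vector_Spaces.linear sc sc (br x))
     \<and> (\<forall>y. Vector_Spaces.linear sc sc (\<lambda>x. br x y))
     \<and> (\<forall>x. br x x = 0)
     \<and> (\<forall>x y z. br x (br y z) + br y (br z x) + br z (br x y) = 0)"

definition fin_dim :: "(complex \<Rightarrow> 'a::ab_group_add \<Rightarrow> 'a) \<Rightarrow> bool" where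
  "fin_dim sc \<longleftrightarrow> (\<exists>B. finite B \<and> module.span sc B = UNIV)"

definition brset :: "(complex \<Rightarrow> 'a::ab_group_add \<Rightarrow> 'a) \<Rightarrow> ('a \<Rightarrow> 'a \<Rightarrow> 'a) \<Rightarrow> 'a set \<Rightarrow> 'a set \<Rightarrow> 'a set" where
  "brset sc br A B = module.span sc {br a b | a b. a \<in> A \<and> b \<in> B}"

definition derived :: "(complex \<Rightarrow> 'a::ab_group_add \<Rightarrow> 'a) \<Rightarrow> ('a \<Rightarrow> 'a \<Rightarrow> 'a) \<Rightarrow> 'a set" where
  "derived sc br = brset sc br UNIV UNIV"

text \<open>Lower central series: L^0 = L, L^1 = [L,L], L^k = [L, L^(k-1)].\<close>
fun lcs :: "(complex \<Rightarrow> 'a::ab_group_add \<Rightarrow> 'a) \<Rightarrow> ('a \<Rightarrow> 'a \<Rightarrow> 'a) \<Rightarrow> nat \<Rightarrow> 'a set" where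
  "lcs sc br 0 = UNIV"
| "lcs sc br (Suc k) = brset sc br UNIV (lcs sc br k)"

fun dser :: "(complex \<Rightarrow> 'a::ab_group_add \<Rightarrow> 'a) \<Rightarrow> ('a \<Rightarrow> 'a \<Rightarrow> 'a) \<Rightarrow> nat \<Rightarrow> 'a set" where
  "dser sc br 0 = UNIV"
| "dser sc br (Suc k) = brset sc br (dser sc br k) (dser sc br k)"

definition nilpotent_lie :: "(complex \<Rightarrow> 'a::ab_group_add \<Rightarrow> 'a) \<Rightarrow> ('a \<Rightarrow> 'a \<Rightarrow> 'a) \<Rightarrow> bool" where
  "nilpotent_lie sc br \<longleftrightarrow> (\<exists>k. lcs sc br k = {0})"

definition solvable_lie :: "(complex \<Rightarrow> 'a::ab_group_add \<Rightarrow> 'a) \<Rightarrow> ('a \<Rightarrow> 'a \<Rightarrow> 'a) \<Rightarrow> bool" where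
  "solvable_lie sc br \<longleftrightarrow> (\<exists>k. dser sc br k = {0})"

definition centralizer :: "('a \<Rightarrow> 'a \<Rightarrow> 'a::ab_group_add) \<Rightarrow> 'a set \<Rightarrow> 'a set" where
  "centralizer br S = {x. \<forall>s\<in>S. br x s = 0}"

definition center :: "('a \<Rightarrow> 'a \<Rightarrow> 'a::ab_group_add) \<Rightarrow> 'a set" where
  "center br = centralizer br UNIV"

text \<open>Pure: Z(L) contained in [L,L] (the equivalent characterization given in the paper).\<close>
definition pure_lie :: "(complex \<Rightarrow> 'a::ab_group_add \<Rightarrow> 'a) \<Rightarrow> ('a \<Rightarrow> 'a \<Rightarrow> 'a) \<Rightarrow> bool" where
  "pure_lie sc br \<longleftrightarrow> center br \<subseteq> derived sc br"

definition breadth_elt :: "(complex \<Rightarrow> 'a::ab_group_add \<Rightarrow> 'a) \<Rightarrow> ('a \<Rightarrow> 'a \<Rightarrow> 'a) \<Rightarrow> 'a \<Rightarrow> nat" where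
  "breadth_elt sc br x = vector_space.dim sc (range (br x))"

definition breadth :: "(complex \<Rightarrow> 'a::ab_group_add \<Rightarrow> 'a) \<Rightarrow> ('a \<Rightarrow> 'a \<Rightarrow> 'a) \<Rightarrow> nat" where
  "breadth sc br = Max (range (breadth_elt sc br))"

definition lie_ideal :: "(complex \<Rightarrow> 'a::ab_group_add \<Rightarrow> 'a) \<Rightarrow> ('a \<Rightarrow> 'a \<Rightarrow> 'a) \<Rightarrow> 'a set \<Rightarrow> bool" where
  "lie_ideal sc br I \<longleftrightarrow> module.subspace sc I \<and> (\<forall>x y. y \<in> I \<longrightarrow> br x y \<in> I)"

definition abelian_ideal :: "(complex \<Rightarrow> 'a::ab_group_add \<Rightarrow> 'a) \<Rightarrow> ('a \<Rightarrow> 'a \<Rightarrow> 'a) \<Rightarrow> 'a set \<Rightarrow> bool" where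
  "abelian_ideal sc br I \<longleftrightarrow> lie_ideal sc br I \<and> (\<forall>x\<in>I. \<forall>y\<in>I. br x y = 0)"

end

theory Submission
  imports Defs
begin

text \<open>A Lie algebra whose derived algebra is spanned by two elements \<open>e\<^sub>1, e\<^sub>2\<close> has abelian
derived algebra, over any field. Each \<open>ad z\<close> is a derivation preserving \<open>[L,L]\<close>, so it sends
\<open>y = [e\<^sub>1,e\<^sub>2]\<close> to (trace of \<open>ad z\<close> on \<open>[L,L]\<close>) \<open>\<cdot> y\<close>: \<open>y\<close> is a common eigenvector of all
\<open>ad z\<close>, and the Jacobi identity then gives \<open>[[a,b],y] = 0\<close>, i.e. \<open>[L,L]\<close> centralizes \<open>y\<close>.
Writing \<open>y = g\<^sub>1 e\<^sub>1 + g\<^sub>2 e\<^sub>2\<close> yields \<open>[e\<^sub>1,y] = g\<^sub>2 y\<close> and \<open>[e\<^sub>2,y] = -g\<^sub>1 y\<close>, whence \<open>y = 0\<close>.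
So when \<open>dim [L,L] = 2\<close> all three conditions of the proposition hold, the centralizer
containing \<open>[L,L] \<noteq> 0\<close>.\<close>

locale lie_alg = vector_space scale for scale :: "'k::field \<Rightarrow> 'a::ab_group_add \<Rightarrow> 'a" +
  fixes br :: "'a \<Rightarrow> 'a \<Rightarrow> 'a"
  assumes linear_bracket_right: "\<And>x. Vector_Spaces.linear scale scale (br x)"
    and linear_bracket_left: "\<And>y. Vector_Spaces.linear scale scale (\<lambda>x. br x y)"
    and bracket_self: "\<And>x. br x x = 0"
    and jacobi: "\<And>x y z. br x (br y z) + br y (br z x) + br z (br x y) = 0"
begin

lemma module_hom_bracket_right: "module_hom scale scale (br x)"
  using linear_bracket_right[of x] by (simp add: module_hom_iff_linear)

lemma module_hom_bracket_left: "module_hom scale scale (\<lambda>x. br x y)"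
  using linear_bracket_left[of y] by (simp add: module_hom_iff_linear)

lemma bracket_add_right: "br x (a + b) = br x a + br x b"
  using module_hom.add[OF module_hom_bracket_right] by blast

lemma bracket_scale_right: "br x (scale c a) = scale c (br x a)"
  using module_hom.scale[OF module_hom_bracket_right] by blast

lemma bracket_add_left: "br (a + b) y = br a y + br b y"
  using module_hom.add[OF module_hom_bracket_left] by blast

lemma bracket_scale_left: "br (scale c a) y = scale c (br a y)"
  using module_hom.scale[OF module_hom_bracket_left] by blast

lemma bracket_zero_left: "br 0 y = 0"
  by (metis bracket_add_left add_cancel_right_right)

lemma bracket_neg_right: "br x (- a) = - br x a"
  using module_hom.neg[OF module_hom_bracket_right] by blast

lemma bracket_antisym: "br x y = - br y x"
proof -
  have "0 = br (x + y) (x + y)" by (simp add: bracket_self)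
  also have "\<dots> = br x x + br x y + (br y x + br y y)"
    by (simp add: bracket_add_left bracket_add_right add.assoc)
  finally have "br x y + br y x = 0" by (simp add: bracket_self)
  then show ?thesis by (simp add: eq_neg_iff_add_eq_0)
qed

lemma bracket_leibniz: "br z (br x y) = br (br z x) y + br x (br z y)"
proof -
  have "br z (br x y) - br x (br z y) - br (br z x) y = 0"
    using jacobi[of z x y]
    by (simp add: bracket_antisym[of y z] bracket_antisym[of y "br z x"] bracket_neg_right)
  then show ?thesis by (simp add: algebra_simps)
qed

lemma subspace_centralizer: "subspace {w. br w y = 0}"
  by (auto simp: subspace_def bracket_zero_left bracket_add_left bracket_scale_left)

definition derived_alg :: "'a set" where
  "derived_alg = span {br a b | a b. True}"

lemma bracket_in_derived_alg: "br a b \<in> derived_alg"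
  unfolding derived_alg_def by (rule span_base) blast

lemma derived_alg_centralizes_common_eigenvector:
  assumes eigen: "\<And>z. \<exists>t. br z y = scale t y" and w: "w \<in> derived_alg"
  shows "br w y = 0"
proof -
  have "br (br a b) y = 0" for a b
  proof -
    obtain p q where p: "br a y = scale p y" and q: "br b y = scale q y"
      using eigen by metis
    have "br (br a b) y = br a (br b y) - br b (br a y)"
      using bracket_leibniz[of a b y] by (simp add: bracket_antisym[of b "br a y"] algebra_simps)
    also have "\<dots> = 0"
      by (simp add: p q bracket_scale_right mult.commute)
    finally show ?thesis .
  qed
  then have "{br a b | a b. True} \<subseteq> {w. br w y = 0}" by blast
  then have "derived_alg \<subseteq> {w. br w y = 0}"
    unfolding derived_alg_def by (rule span_minimal[OF _ subspace_centralizer])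
  then show ?thesis using w by blast
qed

lemma derived_alg_abelian_if_spanned_by_two:
  assumes D: "derived_alg = span {e\<^sub>1, e\<^sub>2}"
    and u: "u \<in> derived_alg" and v: "v \<in> derived_alg"
  shows "br u v = 0"
proof -
  have coords: "\<exists>a b. w = scale a e\<^sub>1 + scale b e\<^sub>2" if "w \<in> derived_alg" for w
  proof -
    have "w \<in> span {e\<^sub>1, e\<^sub>2}" using that D by simp
    then obtain a where "w - scale a e\<^sub>1 \<in> span {e\<^sub>2}"
      by (auto simp: span_insert)
    then obtain b where "w - scale a e\<^sub>1 = scale b e\<^sub>2" by (auto simp: span_singleton)
    then have "w = scale a e\<^sub>1 + scale b e\<^sub>2" by (simp add: algebra_simps)
    then show ?thesis by blast
  qed
  define y where "y = br e\<^sub>1 e\<^sub>2"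
  have y_eigen: "\<exists>t. br z y = scale t y" for z
  proof -
    obtain a b where a: "br z e\<^sub>1 = scale a e\<^sub>1 + scale b e\<^sub>2"
      using coords[OF bracket_in_derived_alg] by blast
    obtain c d where d: "br z e\<^sub>2 = scale c e\<^sub>1 + scale d e\<^sub>2"
      using coords[OF bracket_in_derived_alg] by blast
    have "br z y = scale a y + scale d y"
      unfolding y_def bracket_leibniz[of z] a d
      by (simp add: bracket_add_left bracket_add_right bracket_scale_left bracket_scale_right
          bracket_self)
    then have "br z y = scale (a + d) y" by (simp add: scale_left_distrib)
    then show ?thesis ..
  qed
  have e_in_D: "e\<^sub>1 \<in> derived_alg" "e\<^sub>2 \<in> derived_alg"
    using D by (auto intro: span_base)
  have "y = 0"
  proof (rule ccontr)
    assume "y \<noteq> 0"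
    obtain g\<^sub>1 g\<^sub>2 where g: "y = scale g\<^sub>1 e\<^sub>1 + scale g\<^sub>2 e\<^sub>2"
      using coords[OF bracket_in_derived_alg] y_def by blast
    have "br e\<^sub>1 (scale g\<^sub>1 e\<^sub>1 + scale g\<^sub>2 e\<^sub>2) = scale g\<^sub>2 y"
      "br e\<^sub>2 (scale g\<^sub>1 e\<^sub>1 + scale g\<^sub>2 e\<^sub>2) = - scale g\<^sub>1 y"
      by (simp_all add: bracket_add_right bracket_scale_right bracket_self
          y_def bracket_antisym[of e\<^sub>2 e\<^sub>1])
    then have "br e\<^sub>1 y = scale g\<^sub>2 y" "br e\<^sub>2 y = - scale g\<^sub>1 y"
      by (simp_all only: g[symmetric])
    moreover have "br e\<^sub>1 y = 0" "br e\<^sub>2 y = 0"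
      using derived_alg_centralizes_common_eigenvector[OF y_eigen] e_in_D by auto
    ultimately have "g\<^sub>1 = 0" "g\<^sub>2 = 0" using \<open>y \<noteq> 0\<close> by auto
    then show False using g \<open>y \<noteq> 0\<close> by simp
  qed
  obtain a\<^sub>1 a\<^sub>2 b\<^sub>1 b\<^sub>2 where "u = scale a\<^sub>1 e\<^sub>1 + scale a\<^sub>2 e\<^sub>2" "v = scale b\<^sub>1 e\<^sub>1 + scale b\<^sub>2 e\<^sub>2"
    using coords[OF u] coords[OF v] by blast
  moreover have "br e\<^sub>1 e\<^sub>2 = 0" "br e\<^sub>2 e\<^sub>1 = 0"
    using \<open>y = 0\<close> y_def bracket_antisym[of e\<^sub>2 e\<^sub>1] by simp_all
  ultimately show ?thesis
    by (simp add: bracket_add_right bracket_add_left bracket_scale_right bracket_scale_left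
        bracket_self)
qed

lemma derived_alg_abelian_if_dim_2:
  assumes "dim derived_alg = 2" and "u \<in> derived_alg" and "v \<in> derived_alg"
  shows "br u v = 0"
proof -
  obtain B where B: "B \<subseteq> derived_alg" "derived_alg \<subseteq> span B" "card B = 2"
    using basis_exists assms(1) by metis
  then obtain e\<^sub>1 e\<^sub>2 where "B = {e\<^sub>1, e\<^sub>2}" by (auto simp: card_2_iff)
  moreover have "span B = derived_alg"
    using B by (intro span_subspace) (simp_all add: derived_alg_def)
  ultimately show ?thesis using derived_alg_abelian_if_spanned_by_two assms(2,3) by blast
qed

end

lemma lie_alg_if_lie_algebra: "lie_algebra sc br \<Longrightarrow> lie_alg sc br"
  unfolding lie_algebra_def lie_alg_def lie_alg_axioms_def by auto

lemma derived_eq_derived_alg: "lie_algebra sc br \<Longrightarrow> derived sc br = lie_alg.derived_alg sc br"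
  by (simp add: derived_def brset_def lie_alg.derived_alg_def[OF lie_alg_if_lie_algebra])

lemma derived_ideal:
  assumes "lie_algebra sc br"
  shows "lie_ideal sc br (derived sc br)"
proof -
  interpret lie_alg sc br using assms by (rule lie_alg_if_lie_algebra)
  show ?thesis
    unfolding lie_ideal_def derived_eq_derived_alg[OF assms]
    using bracket_in_derived_alg subspace_span[of "{br a b | a b. True}"]
    by (simp add: derived_alg_def)
qed

theorem proposition3p6:
  fixes sc :: "complex \<Rightarrow> 'a::ab_group_add \<Rightarrow> 'a" and br :: "'a \<Rightarrow> 'a \<Rightarrow> 'a"
  assumes "lie_algebra sc br"
    and "fin_dim sc"
    and "pure_lie sc br"
    and "\<not> nilpotent_lie sc br"
    and "solvable_lie sc br"
    and "breadth sc br = 2"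
    and "vector_space.dim sc (derived sc br) = 2"
    and "\<forall>k\<ge>2. vector_space.dim sc (lcs sc br k) = 2"
  shows "(centralizer br (derived sc br) \<noteq> {0} \<longleftrightarrow> abelian_ideal sc br (derived sc br))
       \<and> (abelian_ideal sc br (derived sc br) \<longleftrightarrow> derived sc br \<subseteq> centralizer br (derived sc br))"
proof -
  interpret lie_alg sc br using assms(1) by (rule lie_alg_if_lie_algebra)
  let ?D = "derived sc br"
  have abelian: "\<forall>u\<in>?D. \<forall>v\<in>?D. br u v = 0"
    using derived_alg_abelian_if_dim_2 assms(7) by (simp add: derived_eq_derived_alg[OF assms(1)])
  then have "abelian_ideal sc br ?D"
    unfolding abelian_ideal_def using derived_ideal[OF assms(1)] by blast
  moreover have "?D \<subseteq> centralizer br ?D"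
    unfolding centralizer_def using abelian by blast
  moreover have "?D \<noteq> {0}"
  proof
    assume "?D = {0}"
    then have "?D = span {}" by simp
    then have "dim ?D = 0" by (intro dim_unique[of "{}"]) (auto simp: independent_empty)
    then show False using assms(7) by simp
  qed
  moreover have "0 \<in> ?D"
    by (simp add: derived_eq_derived_alg[OF assms(1)] derived_alg_def span_zero)
  ultimately have "centralizer br ?D \<noteq> {0}" by blast
  with \<open>abelian_ideal sc br ?D\<close> \<open>?D \<subseteq> centralizer br ?D\<close> show ?thesis by blast
qed

end
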